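(* Let $\mathcal{F}[0,1]$ be a Banach algebra (over $\mathbb{F}\in\{\mathbb{R},\mathbb{C}\}$, with pointwise operations, norm $\|\cdot\|_{\mathcal F}$) of functions $[0,1]\to\mathbb{F}$ that is continuously embedded into $B[0,1]$. Suppose $\mathcal{F}[0,1]$ satisfies the symmetry property, the inverse closedness property and the selection principle. Then the multiplication in $\mathcal{F}[0,1]$ is locally open at every pair of jointly nondegenerate functions $(F,G)\in(\mathcal{F}[0,1])^2$; i.e. for every $\varepsilon>0$ there is $\delta>0$ such that every $u\in\mathcal F[0,1]$ with $\|u-FG\|_{\mathcal F}<\delta$ can be written as $u=fg$ with $f,g\in\mathcal F[0,1]$, $\|f-F\|_{\mathcal F}<\varepsilon$, $\|g-G\|_{\mathcal F}<\varepsilon$.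
   Context: $B[0,1]$ denotes the Banach algebra of all bounded functions $f:[0,1]\to\mathbb{F}$ with norm $\|f\|_\infty=\sup_{x\in[0,1]}|f(x)|$. Functions $f,g\in B[0,1]$ are jointly nondegenerate if $\inf_{x\in[0,1]}(|f(x)|+|g(x)|)>0$. $\mathcal F[0,1]$ has the symmetry property if for every $f\in\mathcal F[0,1]$ its complex conjugate $\overline f\in\mathcal F[0,1]$ and $\|\overline f\|_{\mathcal F}=\|f\|_{\mathcal F}$. It has the inverse closedness property if for every $f\in\mathcal F[0,1]$ with $\inf_{x\in[0,1]}|f(x)|>0$ one has $1/f\in\mathcal F[0,1]$ and $\|1/f\|_{\mathcal F}\le(\inf_{x\in[0,1]}|f(x)|)^{-2}\|f\|_{\mathcal F}$. It satisfies the selection principle if every sequence $(f_n)$ with $\sup_n\|f_n\|_{\mathcal F}<\infty$ has a subsequence converging pointwise on $[0,1]$ to some $f\in\mathcal F[0,1]$. Multiplication is locally open at $(a,b)$ if for every $\varepsilon>0$ there is $\delta>0$ with $B(ab,\delta)\subset B(a,\varepsilon)\cdot B(b,\varepsilon)$, where $B(a,r)$ is the open ball of radius $r$ about $a$ and $X\cdot Y=\{xy: x\in X, y\in Y\}$. *)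

theory Defs
  imports "HOL-Analysis.Analysis"
begin

text \<open>Functions on [0,1] with values in the scalar field K (K = \<real> or K = \<complex>,
  both seen inside complex), represented as maps real => complex that vanish
  outside [0,1].\<close>

definition fun_banach_algebra ::
  "complex set \<Rightarrow> (real \<Rightarrow> complex) set \<Rightarrow> ((real \<Rightarrow> complex) \<Rightarrow> real) \<Rightarrow> bool" where
  "fun_banach_algebra K A N \<longleftrightarrow>
     (K = \<real> \<or> K = UNIV) \<and>
     (\<forall>f\<in>A. \<forall>x. x \<notin> {0..1} \<longrightarrow> f x = 0) \<and>
     (\<forall>f\<in>A. f ` {0..1} \<subseteq> K) \<and>
     (\<lambda>x. 0) \<in> A \<and>
     (\<forall>f\<in>A. \<forall>g\<in>A. (\<lambda>x. f x + g x) \<in> A) \<and>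
     (\<forall>c\<in>K. \<forall>f\<in>A. (\<lambda>x. c * f x) \<in> A) \<and>
     (\<forall>f\<in>A. \<forall>g\<in>A. (\<lambda>x. f x * g x) \<in> A) \<and>
     (\<forall>f\<in>A. N f \<ge> 0 \<and> (N f = 0 \<longleftrightarrow> f = (\<lambda>x. 0))) \<and>
     (\<forall>f\<in>A. \<forall>g\<in>A. N (\<lambda>x. f x + g x) \<le> N f + N g) \<and>
     (\<forall>c\<in>K. \<forall>f\<in>A. N (\<lambda>x. c * f x) = cmod c * N f) \<and>
     (\<forall>f\<in>A. \<forall>g\<in>A. N (\<lambda>x. f x * g x) \<le> N f * N g) \<and>
     (\<forall>fs :: nat \<Rightarrow> real \<Rightarrow> complex. (\<forall>n. fs n \<in> A) \<and>
           (\<forall>e>0. \<exists>M. \<forall>m\<ge>M. \<forall>n\<ge>M. N (\<lambda>x. fs m x - fs n x) < e)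
           \<longrightarrow> (\<exists>f\<in>A. (\<lambda>n. N (\<lambda>x. fs n x - f x)) \<longlonglongrightarrow> 0))"

definition cont_embedded_B :: "(real \<Rightarrow> complex) set \<Rightarrow> ((real \<Rightarrow> complex) \<Rightarrow> real) \<Rightarrow> bool" where
  "cont_embedded_B A N \<longleftrightarrow> (\<exists>C. \<forall>f\<in>A. \<forall>x\<in>{0..1}. cmod (f x) \<le> C * N f)"

definition symmetry_property :: "(real \<Rightarrow> complex) set \<Rightarrow> ((real \<Rightarrow> complex) \<Rightarrow> real) \<Rightarrow> bool" where
  "symmetry_property A N \<longleftrightarrow>
     (\<forall>f\<in>A. (\<lambda>x. cnj (f x)) \<in> A \<and> N (\<lambda>x. cnj (f x)) = N f)"

text \<open>Pointwise inverse; outside [0,1] it is 0 since inverse 0 = 0.\<close>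
definition inverse_closedness :: "(real \<Rightarrow> complex) set \<Rightarrow> ((real \<Rightarrow> complex) \<Rightarrow> real) \<Rightarrow> bool" where
  "inverse_closedness A N \<longleftrightarrow>
     (\<forall>f\<in>A. (INF x\<in>{0..1}. cmod (f x)) > 0 \<longrightarrow>
        (\<lambda>x. inverse (f x)) \<in> A \<and>
        N (\<lambda>x. inverse (f x)) \<le> (INF x\<in>{0..1}. cmod (f x)) powi (-2) * N f)"

definition selection_principle :: "(real \<Rightarrow> complex) set \<Rightarrow> ((real \<Rightarrow> complex) \<Rightarrow> real) \<Rightarrow> bool" where
  "selection_principle A N \<longleftrightarrow>
     (\<forall>fs :: nat \<Rightarrow> real \<Rightarrow> complex. (\<forall>n. fs n \<in> A) \<and> (\<exists>B. \<forall>n. N (fs n) \<le> B) \<longrightarrow>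
        (\<exists>r f. strict_mono r \<and> f \<in> A \<and> (\<forall>x\<in>{0..1}. (\<lambda>n. fs (r n) x) \<longlonglongrightarrow> f x)))"

definition jointly_nondegenerate :: "(real \<Rightarrow> complex) \<Rightarrow> (real \<Rightarrow> complex) \<Rightarrow> bool" where
  "jointly_nondegenerate f g \<longleftrightarrow> (INF x\<in>{0..1}. cmod (f x) + cmod (g x)) > 0"

definition mult_locally_open_at ::
  "(real \<Rightarrow> complex) set \<Rightarrow> ((real \<Rightarrow> complex) \<Rightarrow> real) \<Rightarrow> (real \<Rightarrow> complex) \<Rightarrow> (real \<Rightarrow> complex) \<Rightarrow> bool" where
  "mult_locally_open_at A N a b \<longleftrightarrow>
     (\<forall>\<epsilon>>0. \<exists>\<delta>>0. \<forall>u\<in>A. N (\<lambda>x. u x - a x * b x) < \<delta> \<longrightarrow>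
        (\<exists>f\<in>A. \<exists>g\<in>A. u = (\<lambda>x. f x * g x) \<and>
           N (\<lambda>x. f x - a x) < \<epsilon> \<and> N (\<lambda>x. g x - b x) < \<epsilon>))"

end

theory Submission
  imports Defs
begin

text \<open>Put \<open>h = F \<cdot> cnj F + G \<cdot> cnj G = |F|\<^sup>2 + |G|\<^sup>2\<close>; joint nondegeneracy bounds \<open>h\<close> below
  on [0,1], so \<open>r = 1/h\<close> lies in the algebra by inverse closedness, and conjugates lie in it by
  symmetry. Look for the factors in the form \<open>f = F + cnj G \<cdot> s\<close>, \<open>g = G + cnj F \<cdot> s\<close>. Then
  \<open>f g = F G + h s + cnj F \<cdot> cnj G \<cdot> s\<^sup>2\<close>, so \<open>f g = u\<close> becomes the quadratic equation
  \<open>s = r (u - F G) - r \<cdot> cnj F \<cdot> cnj G \<cdot> s\<^sup>2\<close>. If \<open>u\<close> is close to \<open>F G\<close>, its right-hand side is a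
  contraction of a small closed ball of the (complete) algebra, and Banach's fixed point theorem
  gives a small solution \<open>s\<close>; then \<open>f\<close> and \<open>g\<close> are close to \<open>F\<close> and \<open>G\<close>.\<close>

lemma corona_factorization:
  fixes F G a b r s w :: "'a :: field"
  assumes "r * (F * a + G * b) = 1" and "s = r * w - r * (a * b) * (s * s)"
  shows "(F + b * s) * (G + a * s) = F * G + w"
proof -
  have "(F * a + G * b) * s = (F * a + G * b) * (r * w - r * (a * b) * (s * s))"
    using assms(2) by simp
  also have "\<dots> = (r * (F * a + G * b)) * w - (r * (F * a + G * b)) * (a * b * (s * s))"
    by (simp add: algebra_simps)
  finally have "(F * a + G * b) * s = w - a * b * (s * s)"
    using assms(1) by simp
  then show ?thesis
    by (simp add: algebra_simps)
qed

lemma small_positive_multiplier: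
  fixes c e :: real
  assumes "0 < e"
  shows "\<forall>\<^sub>F R in at_right 0. c * R < e"
proof -
  have "((\<lambda>R. c * R) \<longlongrightarrow> 0) (at_right 0)"
    by (intro tendsto_mult_right_zero tendsto_ident_at)
  then show ?thesis
    using order_tendstoD(2) assms by blast
qed

locale function_banach_algebra =
  fixes K :: "complex set" and A :: "(real \<Rightarrow> complex) set"
    and N :: "(real \<Rightarrow> complex) \<Rightarrow> real"
  assumes banach_algebra: "fun_banach_algebra K A N"
begin

lemma vanishes_outside: "f \<in> A \<Longrightarrow> x \<notin> {0..1} \<Longrightarrow> f x = 0"
  using banach_algebra unfolding fun_banach_algebra_def by blast

lemma of_real_mem_scalars: "complex_of_real c \<in> K"
  using banach_algebra unfolding fun_banach_algebra_def by auto

lemma zero_mem: "(\<lambda>x. 0) \<in> A"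
  and add_mem: "f \<in> A \<Longrightarrow> g \<in> A \<Longrightarrow> (\<lambda>x. f x + g x) \<in> A"
  and scale_mem: "c \<in> K \<Longrightarrow> f \<in> A \<Longrightarrow> (\<lambda>x. c * f x) \<in> A"
  and mult_mem: "f \<in> A \<Longrightarrow> g \<in> A \<Longrightarrow> (\<lambda>x. f x * g x) \<in> A"
  using banach_algebra unfolding fun_banach_algebra_def by blast+

lemma norm_nonneg: "f \<in> A \<Longrightarrow> 0 \<le> N f"
  and norm_eq_zero_iff: "f \<in> A \<Longrightarrow> N f = 0 \<longleftrightarrow> f = (\<lambda>x. 0)"
  and norm_add_le: "f \<in> A \<Longrightarrow> g \<in> A \<Longrightarrow> N (\<lambda>x. f x + g x) \<le> N f + N g"
  and norm_scale: "c \<in> K \<Longrightarrow> f \<in> A \<Longrightarrow> N (\<lambda>x. c * f x) = cmod c * N f"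
  and norm_mult_le: "f \<in> A \<Longrightarrow> g \<in> A \<Longrightarrow> N (\<lambda>x. f x * g x) \<le> N f * N g"
  using banach_algebra unfolding fun_banach_algebra_def by blast+

lemma Cauchy_converges:
  assumes "\<And>n. fs n \<in> A"
    and "\<And>e. e > 0 \<Longrightarrow> \<exists>M. \<forall>m\<ge>M. \<forall>n\<ge>M. N (\<lambda>x. fs m x - fs n x) < e"
  shows "\<exists>f\<in>A. (\<lambda>n. N (\<lambda>x. fs n x - f x)) \<longlonglongrightarrow> 0"
  using banach_algebra assms unfolding fun_banach_algebra_def by blast

lemma minus_mem: "f \<in> A \<Longrightarrow> (\<lambda>x. - f x) \<in> A"
  using scale_mem[OF of_real_mem_scalars[of "-1"]] by simp

lemma diff_mem: "f \<in> A \<Longrightarrow> g \<in> A \<Longrightarrow> (\<lambda>x. f x - g x) \<in> A"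
  using add_mem[OF _ minus_mem[of g], of f] by simp

lemma norm_minus: "f \<in> A \<Longrightarrow> N (\<lambda>x. - f x) = N f"
  using norm_scale[OF of_real_mem_scalars[of "-1"]] by simp

lemma norm_minus_commute: "f \<in> A \<Longrightarrow> g \<in> A \<Longrightarrow> N (\<lambda>x. f x - g x) = N (\<lambda>x. g x - f x)"
  using norm_minus[OF diff_mem[of g f]] by simp

lemma norm_diff_le: "f \<in> A \<Longrightarrow> g \<in> A \<Longrightarrow> N (\<lambda>x. f x - g x) \<le> N f + N g"
  using norm_add_le[OF _ minus_mem[of g], of f] norm_minus[of g] by simp

lemma norm_mult_mult_le:
  assumes "f \<in> A" "g \<in> A" "h \<in> A"
  shows "N (\<lambda>x. f x * (g x * h x)) \<le> N f * (N g * N h)"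
proof -
  have "N (\<lambda>x. f x * (g x * h x)) \<le> N f * N (\<lambda>x. g x * h x)"
    using norm_mult_le[OF assms(1) mult_mem[OF assms(2,3)]] .
  also have "\<dots> \<le> N f * (N g * N h)"
    using norm_mult_le[OF assms(2,3)] norm_nonneg[OF assms(1)] by (rule mult_left_mono)
  finally show ?thesis .
qed

lemma norm_zero: "N (\<lambda>x. 0) = 0"
  using norm_eq_zero_iff[OF zero_mem] by simp

text \<open>Outside \<open>A\<close> the distance is the junk value 0, so that the axioms of
  \<open>Metric_space\<close>, which quantify over all functions, hold.\<close>
definition norm_dist :: "(real \<Rightarrow> complex) \<Rightarrow> (real \<Rightarrow> complex) \<Rightarrow> real" where
  "norm_dist f g = (if f \<in> A \<and> g \<in> A then N (\<lambda>x. f x - g x) else 0)"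

lemma norm_dist_eq: "f \<in> A \<Longrightarrow> g \<in> A \<Longrightarrow> norm_dist f g = N (\<lambda>x. f x - g x)"
  by (simp add: norm_dist_def)

interpretation norm_metric: Metric_space A norm_dist
proof
  fix f g h
  show "0 \<le> norm_dist f g"
    by (simp add: norm_dist_def norm_nonneg diff_mem)
  show "norm_dist f g = norm_dist g f"
    by (auto simp: norm_dist_def intro: norm_minus_commute)
  assume "f \<in> A" "g \<in> A"
  then show "norm_dist f g = 0 \<longleftrightarrow> f = g"
    by (auto simp: norm_dist_def norm_eq_zero_iff diff_mem norm_zero fun_eq_iff)
  assume "h \<in> A"
  then show "norm_dist f h \<le> norm_dist f g + norm_dist g h"
    using norm_add_le[OF diff_mem[of f g] diff_mem[of g h]] \<open>f \<in> A\<close> \<open>g \<in> A\<close>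
    by (simp add: norm_dist_def)
qed

lemma mcomplete_norm_dist: "norm_metric.mcomplete"
  unfolding norm_metric.mcomplete_def
proof (intro allI impI)
  fix fs :: "nat \<Rightarrow> real \<Rightarrow> complex"
  assume "norm_metric.MCauchy fs"
  then have Cauchy: "range fs \<subseteq> A \<and> (\<forall>e>0. \<exists>M. \<forall>m n. M \<le> m \<longrightarrow> M \<le> n \<longrightarrow> norm_dist (fs m) (fs n) < e)"
    unfolding norm_metric.MCauchy_def .
  then have fsA: "\<And>n. fs n \<in> A"
    by auto
  have Cauchy_N: "\<exists>M. \<forall>m\<ge>M. \<forall>n\<ge>M. N (\<lambda>x. fs m x - fs n x) < e" if "e > 0" for e
  proof -
    obtain M where M: "\<forall>m n. M \<le> m \<longrightarrow> M \<le> n \<longrightarrow> norm_dist (fs m) (fs n) < e"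
      using Cauchy \<open>e > 0\<close> by blast
    show ?thesis
    proof (intro exI allI impI)
      fix m n assume "M \<le> m" "M \<le> n"
      then have "norm_dist (fs m) (fs n) < e"
        using M by blast
      then show "N (\<lambda>x. fs m x - fs n x) < e"
        by (simp add: norm_dist_eq fsA)
    qed
  qed
  obtain f where fA: "f \<in> A" and lim: "(\<lambda>n. N (\<lambda>x. fs n x - f x)) \<longlonglongrightarrow> 0"
    using Cauchy_converges[OF fsA Cauchy_N] by blast
  have "(\<lambda>n. norm_dist (fs n) f) = (\<lambda>n. N (\<lambda>x. fs n x - f x))"
    using fsA fA by (simp add: norm_dist_eq)
  then have "limitin norm_metric.mtopology fs f sequentially"
    unfolding norm_metric.limitin_metric_dist_null using fA fsA lim by simp
  then show "\<exists>f. limitin norm_metric.mtopology fs f sequentially"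
    by blast
qed

lemma mcomplete_norm_ball: "Metric_space.mcomplete {f \<in> A. N f \<le> R} norm_dist"
proof -
  interpret ball: Submetric A norm_dist "{f \<in> A. N f \<le> R}"
    by unfold_locales auto
  show ?thesis
  proof (rule ball.sequentially_closedin_mcomplete_imp_mcomplete[OF mcomplete_norm_dist])
    fix fs f
    assume "range fs \<subseteq> {f \<in> A. N f \<le> R} \<and> limitin norm_metric.mtopology fs f sequentially"
    then have fsA: "\<And>n. fs n \<in> A" and fsR: "\<And>n. N (fs n) \<le> R" and fA: "f \<in> A"
      and lim: "(\<lambda>n. norm_dist (fs n) f) \<longlonglongrightarrow> 0"
      by (auto simp: norm_metric.limitin_metric_dist_null)
    have "N f - R \<le> norm_dist (fs n) f" for n
      using norm_add_le[OF diff_mem[OF fA fsA[of n]] fsA[of n]] fsR[of n]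
        norm_minus_commute[OF fA fsA[of n]] fA fsA
      by (simp add: norm_dist_def)
    then have "N f - R \<le> 0"
      using LIMSEQ_le_const[OF lim] by blast
    then show "f \<in> {f \<in> A. N f \<le> R}"
      using fA by simp
  qed
qed

lemma contraction_fixpoint_in_ball:
  assumes "0 \<le> R" and "k < 1"
    and maps: "\<And>s. s \<in> A \<Longrightarrow> N s \<le> R \<Longrightarrow> T s \<in> A \<and> N (T s) \<le> R"
    and contracts: "\<And>s t. \<lbrakk>s \<in> A; t \<in> A; N s \<le> R; N t \<le> R\<rbrakk> \<Longrightarrow>
      N (\<lambda>x. T s x - T t x) \<le> k * N (\<lambda>x. s x - t x)"
  obtains s where "s \<in> A" "N s \<le> R" "T s = s"
proof -
  interpret ball: Submetric A norm_dist "{f \<in> A. N f \<le> R}"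
    by unfold_locales auto
  have "(\<lambda>x. 0) \<in> {f \<in> A. N f \<le> R}"
    using zero_mem norm_zero \<open>0 \<le> R\<close> by simp
  moreover have "T \<in> {f \<in> A. N f \<le> R} \<rightarrow> {f \<in> A. N f \<le> R}"
    using maps by blast
  moreover have "norm_dist (T s) (T t) \<le> k * norm_dist s t"
    if "s \<in> {f \<in> A. N f \<le> R}" "t \<in> {f \<in> A. N f \<le> R}" for s t
    using that maps contracts by (simp add: norm_dist_def)
  ultimately show ?thesis
    using ball.sub.Banach_fixedpoint_thm[OF mcomplete_norm_ball _ _ \<open>k < 1\<close>] that by blast
qed

lemma quadratic_equation_small_solution:
  assumes pA: "p \<in> A" and wA: "w \<in> A" and "0 \<le> R"
    and pR: "N p * R \<le> 1/4" and wR: "N w \<le> R / 2"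
  obtains s where "s \<in> A" "N s \<le> R" "s = (\<lambda>x. w x - p x * (s x * s x))"
proof -
  define T where "T s = (\<lambda>x. w x - p x * (s x * s x))" for s
  have TA: "T s \<in> A" if "s \<in> A" for s
    unfolding T_def using diff_mem[OF wA mult_mem[OF pA mult_mem[OF that that]]] .
  have maps: "T s \<in> A \<and> N (T s) \<le> R" if sA: "s \<in> A" and sR: "N s \<le> R" for s
  proof
    have "N (T s) \<le> N w + N (\<lambda>x. p x * (s x * s x))"
      unfolding T_def using norm_diff_le[OF wA mult_mem[OF pA mult_mem[OF sA sA]]] .
    also have "\<dots> \<le> N w + N p * (N s * N s)"
      using norm_mult_mult_le[OF pA sA sA] by simp
    also have "\<dots> \<le> R / 2 + N p * (R * R)"
      using wR sR norm_nonneg[OF sA] norm_nonneg[OF pA]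
      by (intro add_mono mult_left_mono mult_mono) auto
    also have "\<dots> = R / 2 + (N p * R) * R"
      by (simp add: mult.assoc)
    also have "\<dots> \<le> R"
      using pR \<open>0 \<le> R\<close> mult_right_mono[OF pR \<open>0 \<le> R\<close>] by linarith
    finally show "N (T s) \<le> R" .
  qed (rule TA[OF sA])
  have contracts: "N (\<lambda>x. T s x - T t x) \<le> 1/2 * N (\<lambda>x. s x - t x)"
    if sA: "s \<in> A" and tA: "t \<in> A" and sR: "N s \<le> R" and tR: "N t \<le> R" for s t
  proof -
    have factored: "(\<lambda>x. T s x - T t x) = (\<lambda>x. p x * ((t x - s x) * (t x + s x)))"
      unfolding T_def by (auto simp: algebra_simps)
    have difA: "(\<lambda>x. t x - s x) \<in> A" and sumA: "(\<lambda>x. t x + s x) \<in> A"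
      using diff_mem[OF tA sA] add_mem[OF tA sA] .
    have "N (\<lambda>x. T s x - T t x) \<le> N p * (N (\<lambda>x. t x - s x) * N (\<lambda>x. t x + s x))"
      unfolding factored using norm_mult_mult_le[OF pA difA sumA] .
    also have "\<dots> \<le> N p * (N (\<lambda>x. t x - s x) * (2 * R))"
      using norm_add_le[OF tA sA] sR tR norm_nonneg[OF pA] norm_nonneg[OF difA]
      by (intro mult_left_mono) auto
    also have "\<dots> = 2 * (N p * R) * N (\<lambda>x. s x - t x)"
      using norm_minus_commute[OF sA tA] by simp
    also have "\<dots> \<le> 1/2 * N (\<lambda>x. s x - t x)"
      using pR norm_nonneg[OF diff_mem[OF sA tA]] by (intro mult_right_mono) auto
    finally show ?thesis .
  qed
  obtain s where sA: "s \<in> A" and sR: "N s \<le> R" and fixed: "T s = s"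
    by (rule contraction_fixpoint_in_ball[OF \<open>0 \<le> R\<close> _ maps contracts]) simp_all
  have "s = (\<lambda>x. w x - p x * (s x * s x))"
    using fixed by (simp add: T_def)
  with sA sR show ?thesis
    by (rule that)
qed

lemma factorization_near_product:
  assumes FA: "F \<in> A" and GA: "G \<in> A" and aA: "a \<in> A" and bA: "b \<in> A" and rA: "r \<in> A"
    and corona: "\<And>x. x \<in> {0..1} \<Longrightarrow> r x * (F x * a x + G x * b x) = 1"
    and uA: "u \<in> A" and "0 \<le> R" and abR: "N (\<lambda>x. r x * (a x * b x)) * R \<le> 1/4"
    and uR: "N (\<lambda>x. r x * (u x - F x * G x)) \<le> R / 2"
  obtains s where "s \<in> A" "N s \<le> R" "u = (\<lambda>x. (F x + b x * s x) * (G x + a x * s x))"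
proof -
  have "(\<lambda>x. r x * (a x * b x)) \<in> A" "(\<lambda>x. r x * (u x - F x * G x)) \<in> A"
    using mult_mem diff_mem rA aA bA uA FA GA by auto
  then obtain s where sA: "s \<in> A" and sR: "N s \<le> R" and quadratic:
      "s = (\<lambda>x. r x * (u x - F x * G x) - r x * (a x * b x) * (s x * s x))"
    using quadratic_equation_small_solution \<open>0 \<le> R\<close> abR uR by blast
  have "u x = (F x + b x * s x) * (G x + a x * s x)" for x
  proof (cases "x \<in> {0..1}")
    case True
    then show ?thesis
      using corona_factorization[OF corona[OF True] fun_cong[OF quadratic, of x]] by simp
  qed (simp add: vanishes_outside uA FA GA aA bA sA)
  with sA sR show ?thesis
    using that by blast
qed

lemma mult_locally_open_at_if_corona:
  assumes FA: "F \<in> A" and GA: "G \<in> A" and aA: "a \<in> A" and bA: "b \<in> A" and rA: "r \<in> A"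
    and corona: "\<And>x. x \<in> {0..1} \<Longrightarrow> r x * (F x * a x + G x * b x) = 1"
  shows "mult_locally_open_at A N F G"
  unfolding mult_locally_open_at_def
proof (intro allI impI)
  fix \<epsilon> :: real assume "\<epsilon> > 0"
  let ?p = "\<lambda>x. r x * (a x * b x)"
  obtain R where "R > 0" and pR: "N ?p * R < 1/4" and aR: "N a * R < \<epsilon>" and bR: "N b * R < \<epsilon>"
  proof -
    have "\<forall>\<^sub>F R in at_right 0. 0 < R \<and> N ?p * R < 1/4 \<and> N a * R < \<epsilon> \<and> N b * R < \<epsilon>"
      using \<open>\<epsilon> > 0\<close>
      by (intro eventually_conj eventually_at_right_less small_positive_multiplier) auto
    then show ?thesis
      using that eventually_happens'[OF trivial_limit_at_right_real] by blast
  qed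
  obtain \<delta> where "\<delta> > 0" and r\<delta>: "N r * \<delta> < R / 2"
  proof -
    have "\<forall>\<^sub>F \<delta> in at_right 0. 0 < \<delta> \<and> N r * \<delta> < R / 2"
      using \<open>R > 0\<close> by (intro eventually_conj eventually_at_right_less small_positive_multiplier) auto
    then show ?thesis
      using that eventually_happens'[OF trivial_limit_at_right_real] by blast
  qed
  show "\<exists>\<delta>>0. \<forall>u\<in>A. N (\<lambda>x. u x - F x * G x) < \<delta> \<longrightarrow>
      (\<exists>f\<in>A. \<exists>g\<in>A. u = (\<lambda>x. f x * g x) \<and> N (\<lambda>x. f x - F x) < \<epsilon> \<and> N (\<lambda>x. g x - G x) < \<epsilon>)"
  proof (intro exI conjI ballI impI)
    fix u assume uA: "u \<in> A" and u\<delta>: "N (\<lambda>x. u x - F x * G x) < \<delta>"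
    have dA: "(\<lambda>x. u x - F x * G x) \<in> A"
      using diff_mem[OF uA mult_mem[OF FA GA]] .
    have "N (\<lambda>x. r x * (u x - F x * G x)) \<le> N r * N (\<lambda>x. u x - F x * G x)"
      using norm_mult_le[OF rA dA] .
    also have "\<dots> \<le> N r * \<delta>"
      using u\<delta> norm_nonneg[OF rA] by (intro mult_left_mono) auto
    finally have uR: "N (\<lambda>x. r x * (u x - F x * G x)) \<le> R / 2"
      using r\<delta> by linarith
    obtain s where sA: "s \<in> A" and sR: "N s \<le> R"
      and u_eq: "u = (\<lambda>x. (F x + b x * s x) * (G x + a x * s x))"
      using factorization_near_product[of F G a b r u R, OF FA GA aA bA rA corona uA _ _ uR]
        \<open>R > 0\<close> pR by auto
    have "(\<lambda>x. F x + b x * s x) \<in> A" "(\<lambda>x. G x + a x * s x) \<in> A"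
      using add_mem mult_mem FA GA aA bA sA by auto
    moreover have "N (\<lambda>x. b x * s x) < \<epsilon>" "N (\<lambda>x. a x * s x) < \<epsilon>"
      using norm_mult_le[OF bA sA] norm_mult_le[OF aA sA] aR bR
        mult_left_mono[OF sR norm_nonneg[OF aA]] mult_left_mono[OF sR norm_nonneg[OF bA]]
      by simp_all
    ultimately show "\<exists>f\<in>A. \<exists>g\<in>A. u = (\<lambda>x. f x * g x) \<and> N (\<lambda>x. f x - F x) < \<epsilon> \<and> N (\<lambda>x. g x - G x) < \<epsilon>"
      using u_eq by force
  qed (rule \<open>\<delta> > 0\<close>)
qed

end

lemma jointly_nondegenerate_norm_square_sum_bounded_below:
  assumes "jointly_nondegenerate F G"
  obtains m :: real where "m > 0"
    and "\<And>x. x \<in> {0..1} \<Longrightarrow> m \<le> cmod (F x * cnj (F x) + G x * cnj (G x))"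
proof
  let ?m = "INF y\<in>{0..1}. cmod (F y) + cmod (G y)"
  show "?m\<^sup>2 / 2 > 0"
    using assms unfolding jointly_nondegenerate_def by simp
  fix x :: real assume "x \<in> {0..1}"
  then have "?m \<le> cmod (F x) + cmod (G x)"
    by (intro cINF_lower) (auto intro: bdd_belowI[of _ 0])
  then have "?m\<^sup>2 \<le> (cmod (F x) + cmod (G x))\<^sup>2"
    using assms unfolding jointly_nondegenerate_def by (intro power_mono) auto
  also have "\<dots> \<le> 2 * ((cmod (F x))\<^sup>2 + (cmod (G x))\<^sup>2)"
    using zero_le_power2[of "cmod (F x) - cmod (G x)"] by (simp add: power2_eq_square algebra_simps)
  also have "(cmod (F x))\<^sup>2 + (cmod (G x))\<^sup>2 = cmod (F x * cnj (F x) + G x * cnj (G x))"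
    by (simp only: complex_norm_square[symmetric] of_real_add[symmetric] norm_of_real) simp
  finally show "?m\<^sup>2 / 2 \<le> cmod (F x * cnj (F x) + G x * cnj (G x))"
    by simp
qed

theorem theorem2p1:
  fixes K :: "complex set" and A :: "(real \<Rightarrow> complex) set"
    and N :: "(real \<Rightarrow> complex) \<Rightarrow> real"
  assumes "fun_banach_algebra K A N"
    and "cont_embedded_B A N"
    and "symmetry_property A N"
    and "inverse_closedness A N"
    and "selection_principle A N"
  shows "\<forall>F\<in>A. \<forall>G\<in>A. jointly_nondegenerate F G \<longrightarrow> mult_locally_open_at A N F G"
proof (intro ballI impI)
  interpret function_banach_algebra K A N
    using assms(1) by unfold_locales
  fix F G assume FA: "F \<in> A" and GA: "G \<in> A" and nondeg: "jointly_nondegenerate F G"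
  define h where "h = (\<lambda>x. F x * cnj (F x) + G x * cnj (G x))"
  have FcA: "(\<lambda>x. cnj (F x)) \<in> A" and GcA: "(\<lambda>x. cnj (G x)) \<in> A"
    using assms(3) FA GA unfolding symmetry_property_def by auto
  have hA: "h \<in> A"
    unfolding h_def using add_mem[OF mult_mem[OF FA FcA] mult_mem[OF GA GcA]] .
  obtain m where "m > 0" and h_lower: "\<And>x. x \<in> {0..1} \<Longrightarrow> m \<le> cmod (h x)"
    using jointly_nondegenerate_norm_square_sum_bounded_below[OF nondeg] unfolding h_def by blast
  then have "(INF x\<in>{0..1}. cmod (h x)) > 0"
    using cINF_greatest[of "{0..1::real}" m "\<lambda>x. cmod (h x)"] by force
  then have "(\<lambda>x. inverse (h x)) \<in> A"
    using assms(4) hA unfolding inverse_closedness_def by blast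
  moreover have "inverse (h x) * (F x * cnj (F x) + G x * cnj (G x)) = 1" if "x \<in> {0..1}" for x
    using h_lower[OF that] \<open>m > 0\<close> unfolding h_def by (auto intro: left_inverse)
  ultimately show "mult_locally_open_at A N F G"
    using mult_locally_open_at_if_corona[OF FA GA FcA GcA] by blast
qed

end
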